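(* There exists a continuous function $f:\mathbb{R}\to\mathbb{R}$ such that for every $x\in\mathbb{R}$ there is $\xi_x\in\mathbb{R}$ with $$\liminf_{y\to x}\frac{f(y)-f(x)-\xi_x(y-x)}{|y-x|^2}>-\infty,$$ and yet there is a set $S\subset\mathbb{R}$ of positive Lebesgue measure such that for every $x\in S$ and every $\xi\in\mathbb{R}$, $$\limsup_{y\to x}\frac{f(y)-f(x)-\xi(y-x)}{|y-x|^2}=+\infty.$$ *)

theory Defs
  imports "HOL-Analysis.Analysis"
begin

end

theory Submission
  imports Defs
begin

(* The function is the supremum f = sup_n p_n of parabolic caps: p_n has a cap of height 2^-n and
   radius r_n = 1/(8 * 16^n) centred at every point of the dyadic grid 2^-n Z.  Since the heights tend
   to 0, f is a uniform limit of finite maxima, hence continuous.  Wherever f(x) > 0 the supremum is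
   attained by a single cap, i.e. a concave parabola lying below f and touching it at x; where f(x) = 0,
   f has a minimum at x.  Either way f(y) - f(x) - xi (y - x) >= -C (y - x)^2.
   The caps over [0,1] have total length at most sum_n (2^n + 1) 2 r_n <= 4/7, so a set S of [0,1] of
   measure at least 3/7 avoids all of them, and f vanishes on S.  For x in S and any xi, the grid point
   y of level n on the side where xi (y - x) <= 0 satisfies |y - x| <= 2^-n and f(y) >= 2^-n, so the
   second-order quotient at y is at least 2^n. *)

lemma Liminf_gt_MInfty_if_eventually_bounded_below:
  fixes f :: "'a \<Rightarrow> real"
  assumes "\<forall>\<^sub>F y in F. C \<le> f y"
  shows "Liminf F (\<lambda>y. ereal (f y)) > -\<infinity>"
proof -
  have "ereal C \<le> Liminf F (\<lambda>y. ereal (f y))"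
    using assms by (intro Liminf_bounded) (simp add: eventually_mono)
  then show ?thesis by (rule less_le_trans[rotated]) simp
qed

lemma Limsup_eq_PInfty_if_frequently_unbounded:
  fixes f :: "'a \<Rightarrow> ereal"
  assumes "\<And>M. \<exists>\<^sub>F y in F. ereal M \<le> f y"
  shows "Limsup F f = \<infinity>"
  unfolding Limsup_def top_ereal_def[symmetric]
proof (subst INF_top_conv(1), intro ballI)
  fix P assume "P \<in> {P. eventually P F}"
  then have witness: "\<exists>\<^sub>F y in F. P y \<and> ereal M \<le> f y" for M
    using assms[of M] by (simp add: frequently_eventually_conj)
  show "Sup (f ` Collect P) = top"
    unfolding top_ereal_def
  proof (rule ereal_top)
    fix M
    obtain y where "P y" "ereal M \<le> f y"
      using frequently_ex[OF witness[of M]] by blast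
    then show "ereal M \<le> Sup (f ` Collect P)"
      by (auto intro: SUP_upper2)
  qed
qed

lemma arccos_cos_le_abs: "arccos (cos \<theta>) \<le> \<bar>\<theta>\<bar>"
  using arccos_cos_eq_abs[of \<theta>] arccos_ubound[of "cos \<theta>"] by (cases "\<bar>\<theta>\<bar> \<le> pi") auto

(* The distance to the nearest integer (int_dist_round), in a form that is manifestly continuous. *)
definition int_dist :: "real \<Rightarrow> real" where
  "int_dist t = arccos (cos (2 * pi * t)) / (2 * pi)"

lemma continuous_on_int_dist: "continuous_on UNIV int_dist"
  unfolding int_dist_def by (intro continuous_intros) auto

lemma int_dist_nonneg: "0 \<le> int_dist t"
  unfolding int_dist_def by (simp add: arccos_lbound)

lemma int_dist_shift: "int_dist t = arccos (cos (2 * pi * (t - of_int m))) / (2 * pi)"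
proof -
  have "2 * pi * (t - of_int m) = 2 * pi * t - 2 * pi * of_int m"
    by (simp add: algebra_simps)
  then show ?thesis
    unfolding int_dist_def by (simp add: cos_diff)
qed

lemma int_dist_le: "int_dist t \<le> \<bar>t - of_int m\<bar>"
  using arccos_cos_le_abs[of "2 * pi * (t - of_int m)"]
  by (simp add: int_dist_shift[of t m] divide_le_eq abs_mult mult.commute)

lemma int_dist_round: "int_dist t = \<bar>t - of_int (round t)\<bar>"
proof -
  have "\<bar>2 * pi * (t - of_int (round t))\<bar> \<le> pi"
    using of_int_round_abs_le[of t] by (simp add: abs_mult abs_minus_commute)
  then show ?thesis
    by (simp add: int_dist_shift[of t "round t"] arccos_cos_eq_abs abs_mult)
qed

lemma touching_parabola_lower_bound:
  fixes f :: "real \<Rightarrow> real"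
  assumes below: "\<And>y. c - a * (y - q)^2 \<le> f y" and touch: "f x = c - a * (x - q)^2"
  shows "- a * (y - x)^2 \<le> f y - f x - (- 2 * a * (x - q)) * (y - x)"
proof -
  have "- a * (y - x)^2 = (c - a * (y - q)^2) - (c - a * (x - q)^2) + 2 * a * (x - q) * (y - x)"
    by (simp add: power2_eq_square algebra_simps)
  then show ?thesis
    using below[of y] touch by simp
qed

lemma grid_point_on_side:
  fixes \<delta> :: real
  assumes "\<delta> > 0"
  obtains m :: int where "\<bar>of_int m * \<delta> - x\<bar> \<le> \<delta>" and "\<xi> * (of_int m * \<delta> - x) \<le> 0"
proof (cases "\<xi> \<ge> 0")
  case True
  have "of_int \<lfloor>x / \<delta>\<rfloor> * \<delta> \<le> x" "x < of_int \<lfloor>x / \<delta>\<rfloor> * \<delta> + \<delta>"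
    using floor_divide_lower[OF assms, of x] floor_divide_upper[OF assms, of x]
    by (simp_all add: algebra_simps)
  then show thesis
    using True by (intro that[of "\<lfloor>x / \<delta>\<rfloor>"]) (auto simp: mult_nonneg_nonpos)
next
  case False
  have "x \<le> of_int \<lceil>x / \<delta>\<rceil> * \<delta>" "of_int \<lceil>x / \<delta>\<rceil> * \<delta> < x + \<delta>"
    using ceiling_divide_upper[OF assms, of x] ceiling_divide_lower[OF assms, of x]
    by (simp_all add: algebra_simps)
  then show thesis
    using False by (intro that[of "\<lceil>x / \<delta>\<rceil>"]) (auto simp: mult_nonpos_nonneg)
qed

fun running_max :: "(nat \<Rightarrow> 'a \<Rightarrow> real) \<Rightarrow> nat \<Rightarrow> 'a \<Rightarrow> real" where
  "running_max p 0 y = p 0 y"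
| "running_max p (Suc N) y = max (running_max p N y) (p (Suc N) y)"

lemma running_max_ge: "n \<le> N \<Longrightarrow> p n y \<le> running_max p N y"
  by (induction N) (auto simp: le_Suc_eq)

lemma running_max_attained: "\<exists>n\<le>N. running_max p N y = p n y"
  by (induction N) (auto simp: max_def le_Suc_eq)

lemma continuous_on_running_max:
  fixes p :: "nat \<Rightarrow> 'a::topological_space \<Rightarrow> real"
  shows "(\<And>n. continuous_on S (p n)) \<Longrightarrow> continuous_on S (running_max p N)"
  by (induction N) (auto intro!: continuous_intros)

locale vanishing_family =
  fixes p :: "nat \<Rightarrow> 'a::topological_space \<Rightarrow> real" and h :: "nat \<Rightarrow> real"
  assumes nonneg: "0 \<le> p n y"
    and le_bound: "p n y \<le> h n"
    and bound_tendsto_0: "h \<longlonglongrightarrow> 0"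
begin

lemma eventually_bound_less: "e > 0 \<Longrightarrow> \<exists>N. \<forall>n\<ge>N. h n < e"
  using order_tendstoD(2)[OF bound_tendsto_0] by (simp add: eventually_sequentially)

lemma le_running_max_or_tail_bound:
  assumes "\<forall>n\<ge>N. h n < e"
  shows "p n y \<le> max (running_max p N y) e"
  using running_max_ge[of n N p y] le_bound[of n y] assms[rule_format, of n]
  by (cases "n \<le> N") auto

lemma bdd_above_range: "bdd_above (range (\<lambda>n. p n y))"
proof -
  obtain N where "\<forall>n\<ge>N. h n < 1"
    using eventually_bound_less by force
  then show ?thesis
    by (intro bdd_aboveI[of _ "max (running_max p N y) 1"]) (auto intro: le_running_max_or_tail_bound)
qed

lemma le_SUP: "p n y \<le> (SUP n. p n y)"
  using bdd_above_range by (intro cSUP_upper) auto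

lemma SUP_nonneg: "0 \<le> (SUP n. p n y)"
  using le_SUP[of 0 y] nonneg[of 0 y] by linarith

lemma running_max_le_SUP: "running_max p N y \<le> (SUP n. p n y)"
  using running_max_attained[of N p y] le_SUP by auto

lemma SUP_le_running_max:
  "\<forall>n\<ge>N. h n < e \<Longrightarrow> (SUP n. p n y) \<le> max (running_max p N y) e"
  by (rule cSUP_least) (auto intro: le_running_max_or_tail_bound)

lemma continuous_on_SUP:
  assumes "\<And>n. continuous_on S (p n)"
  shows "continuous_on S (\<lambda>y. SUP n. p n y)"
proof (rule uniform_limit_theorem)
  show "\<forall>\<^sub>F N in sequentially. continuous_on S (running_max p N)"
    using assms by (simp add: continuous_on_running_max)
  show "uniform_limit S (running_max p) (\<lambda>y. SUP n. p n y) sequentially"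
    unfolding uniform_limit_sequentially_iff
  proof (intro allI impI)
    fix e :: real assume "e > 0"
    then obtain N where N: "\<forall>n\<ge>N. h n < e / 2"
      using eventually_bound_less[of "e / 2"] by auto
    have "dist (running_max p M y) (SUP n. p n y) < e" if "N \<le> M" for M y
    proof -
      have "0 \<le> running_max p M y"
        using running_max_ge[of 0 M p y] nonneg[of 0 y] by simp
      then show ?thesis
        using SUP_le_running_max[of M "e / 2" y] N that running_max_le_SUP[of M y] \<open>e > 0\<close>
        by (auto simp: dist_real_def)
    qed
    then show "\<exists>N. \<forall>M\<ge>N. \<forall>y\<in>S. dist (running_max p M y) (SUP n. p n y) < e"
      by blast
  qed
qed simp

lemma SUP_attained:
  assumes "0 < (SUP n. p n y)"
  obtains n where "(SUP n. p n y) = p n y"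
proof -
  obtain N where "\<forall>n\<ge>N. h n < (SUP n. p n y) / 2"
    using eventually_bound_less assms half_gt_zero by blast
  then have "(SUP n. p n y) \<le> running_max p N y"
    using SUP_le_running_max[of N "(SUP n. p n y) / 2" y] assms by simp
  moreover obtain n where "running_max p N y = p n y"
    using running_max_attained[of N p y] by blast
  ultimately show thesis
    using that[of n] le_SUP[of n y] by simp
qed

end

lemma abs_mult_diff_eq:
  fixes c :: real
  assumes "0 < c"
  shows "\<bar>c * y - t\<bar> = c * \<bar>y - t / c\<bar>"
proof -
  have "c * y - t = c * (y - t / c)"
    using assms by (simp add: field_simps)
  then show ?thesis
    using assms by (simp add: abs_mult)
qed

lemma eventually_pow2_ge_and_inverse_less:
  fixes M d :: real
  assumes "0 < d"
  shows "\<forall>\<^sub>F n in sequentially. M \<le> (2::real) ^ n \<and> 1 / 2 ^ n < d"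
proof (rule eventually_conj)
  obtain n0 where n0: "M < 2 ^ n0"
    using real_arch_pow[of 2 M] by auto
  show "\<forall>\<^sub>F n in sequentially. M \<le> (2::real) ^ n"
    unfolding eventually_sequentially
  proof (intro exI allI impI)
    fix n assume "n0 \<le> n"
    then have "(2::real) ^ n0 \<le> 2 ^ n"
      by (rule power_increasing) simp
    then show "M \<le> 2 ^ n"
      using n0 by linarith
  qed
  show "\<forall>\<^sub>F n in sequentially. 1 / (2::real) ^ n < d"
    using order_tendstoD(2)[OF LIMSEQ_divide_realpow_zero[of 2 1] assms] by simp
qed

definition dyadic_dist :: "nat \<Rightarrow> real \<Rightarrow> real" where
  "dyadic_dist n y = int_dist (2^n * y) / 2^n"

lemma dyadic_dist_nonneg: "0 \<le> dyadic_dist n y"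
  by (simp add: dyadic_dist_def int_dist_nonneg)

lemma dyadic_dist_le: "dyadic_dist n y \<le> \<bar>y - of_int m / 2^n\<bar>"
  using int_dist_le[of "2^n * y" m] abs_mult_diff_eq[of "2^n" y "of_int m"]
  by (simp add: dyadic_dist_def divide_le_eq mult.commute)

lemma dyadic_dist_round: "dyadic_dist n y = \<bar>y - of_int (round (2^n * y)) / 2^n\<bar>"
  using abs_mult_diff_eq[of "2^n" y "of_int (round (2^n * y))"]
  by (simp add: dyadic_dist_def int_dist_round)

definition cap_height :: "nat \<Rightarrow> real" where "cap_height n = 1 / 2^n"
definition cap_radius :: "nat \<Rightarrow> real" where "cap_radius n = 1 / (8 * 16^n)"
definition cap_curvature :: "nat \<Rightarrow> real" where
  "cap_curvature n = cap_height n / cap_radius n ^ 2"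

definition cap :: "nat \<Rightarrow> real \<Rightarrow> real" where
  "cap n y = max 0 (cap_height n - cap_curvature n * dyadic_dist n y ^ 2)"

definition cap_sup :: "real \<Rightarrow> real" where "cap_sup y = (SUP n. cap n y)"

lemma cap_height_pos: "0 < cap_height n"
  by (simp add: cap_height_def)

lemma cap_radius_pos: "0 < cap_radius n"
  by (simp add: cap_radius_def)

lemma cap_curvature_pos: "0 < cap_curvature n"
  by (simp add: cap_curvature_def cap_height_def cap_radius_def)

lemma continuous_on_cap: "continuous_on UNIV (cap n)"
  unfolding cap_def dyadic_dist_def
  using continuous_on_int_dist by (intro continuous_intros) (auto intro: continuous_on_compose2)

interpretation caps: vanishing_family cap cap_height
proof
  show "0 \<le> cap n y" for n y by (simp add: cap_def)
  show "cap n y \<le> cap_height n" for n y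
    using cap_curvature_pos[of n] by (simp add: cap_def cap_height_def)
  show "cap_height \<longlonglongrightarrow> 0"
    unfolding cap_height_def by (rule LIMSEQ_divide_realpow_zero) simp
qed

lemma continuous_on_cap_sup: "continuous_on UNIV cap_sup"
  unfolding cap_sup_def by (intro caps.continuous_on_SUP continuous_on_cap)

lemma parabola_le_cap: "cap_height n - cap_curvature n * (y - of_int m / 2^n)^2 \<le> cap n y"
proof -
  have "dyadic_dist n y ^ 2 \<le> (y - of_int m / 2^n)^2"
    using power_mono[OF dyadic_dist_le[of n y m] dyadic_dist_nonneg, of 2] by simp
  then show ?thesis
    using cap_curvature_pos[of n] by (simp add: cap_def mult_left_mono max.coboundedI2)
qed

lemma cap_eq_parabola:
  assumes "0 < cap n x"
  shows "cap n x = cap_height n - cap_curvature n * (x - of_int (round (2^n * x)) / 2^n)^2"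
  using assms by (simp add: cap_def dyadic_dist_round power2_abs split: if_splits)

lemma cap_sup_semiconcave:
  obtains \<xi> a where "\<And>y. - a * (y - x)^2 \<le> cap_sup y - cap_sup x - \<xi> * (y - x)"
proof (cases "cap_sup x = 0")
  case True
  then show thesis
    using caps.SUP_nonneg by (intro that[of 0 0]) (simp add: cap_sup_def)
next
  case False
  then obtain n where n: "cap_sup x = cap n x"
    using caps.SUP_nonneg[of x] caps.SUP_attained[of x] by (force simp: cap_sup_def)
  define q where "q = of_int (round (2^n * x)) / (2::real)^n"
  have "0 < cap n x"
    using False n caps.nonneg[of n x] by simp
  then have touch: "cap_sup x = cap_height n - cap_curvature n * (x - q)^2"
    using n cap_eq_parabola unfolding q_def by simp
  have below: "cap_height n - cap_curvature n * (y - q)^2 \<le> cap_sup y" for y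
    using parabola_le_cap[of n y "round (2^n * x)"] caps.le_SUP[of n y]
    unfolding q_def cap_sup_def by linarith
  show thesis
    using touching_parabola_lower_bound[OF below touch] by (rule that)
qed

definition caps_cover :: "real set" where
  "caps_cover = (\<Union>n. \<Union>m\<in>{0..(2::nat)^n}. ball (real m / 2^n) (cap_radius n))"

definition uncapped :: "real set" where "uncapped = {0..1} - caps_cover"

lemma open_caps_cover: "open caps_cover"
  unfolding caps_cover_def by (intro open_UN ballI open_ball)

lemma uncapped_borel: "uncapped \<in> sets lborel"
  unfolding uncapped_def using open_caps_cover by (intro sets.Diff borel_closed borel_open) auto

lemma uncapped_radius_le_dyadic_dist:
  assumes "x \<in> uncapped"
  shows "cap_radius n \<le> dyadic_dist n x"
proof -
  define m where "m = round (2^n * x)"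
  have x: "0 \<le> x" "x \<le> 1" "x \<notin> caps_cover"
    using assms by (auto simp: uncapped_def)
  have "0 \<le> 2^n * x" "2^n * x \<le> (2::real)^n"
    using x(1,2) mult_left_le[of x "2^n"] by auto
  then have "(- 1 :: real) < of_int m" "(of_int m :: real) < 2^n + 1"
    using of_int_round_ge[of "2^n * x"] of_int_round_le[of "2^n * x"] unfolding m_def by linarith+
  then have "of_int (- 1) < (of_int m :: real)" "(of_int m :: real) < of_int (2^n + 1)"
    by simp_all
  then have "m \<ge> 0" "nat m \<in> {0..2^n}"
    unfolding of_int_less_iff by (simp_all add: nat_le_iff)
  then have "x \<notin> ball (real (nat m) / 2^n) (cap_radius n)"
    using x(3) unfolding caps_cover_def by blast
  then show ?thesis
    using \<open>m \<ge> 0\<close> by (simp add: dyadic_dist_round m_def dist_real_def abs_minus_commute)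
qed

lemma cap_eq_0_if_radius_le:
  assumes "cap_radius n \<le> dyadic_dist n y"
  shows "cap n y = 0"
proof -
  have "cap_radius n ^ 2 \<le> dyadic_dist n y ^ 2"
    using assms cap_radius_pos[of n] by (intro power_mono) auto
  then have "cap_height n \<le> cap_curvature n * dyadic_dist n y ^ 2"
    using cap_curvature_pos[of n] mult_left_mono[of _ _ "cap_curvature n"]
    by (fastforce simp: cap_curvature_def cap_radius_def)
  then show ?thesis
    by (simp add: cap_def)
qed

lemma cap_sup_uncapped: "x \<in> uncapped \<Longrightarrow> cap_sup x = 0"
  by (simp add: cap_sup_def cap_eq_0_if_radius_le uncapped_radius_le_dyadic_dist)

lemma uncapped_quotient_ge_pow2:
  assumes "x \<in> uncapped"
  obtains y where "y \<noteq> x" "\<bar>y - x\<bar> \<le> 1 / 2^n"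
    "2^n \<le> (cap_sup y - cap_sup x - \<xi> * (y - x)) / \<bar>y - x\<bar>^2"
proof -
  obtain m :: int where m: "\<bar>of_int m * (1 / 2^n) - x\<bar> \<le> 1 / 2^n" "\<xi> * (of_int m * (1 / 2^n) - x) \<le> 0"
    using grid_point_on_side[of "1 / 2^n" x \<xi>] by auto
  define y where "y = of_int m / (2::real)^n"
  have close: "\<bar>y - x\<bar> \<le> 1 / 2^n" and side: "\<xi> * (y - x) \<le> 0"
    using m by (simp_all add: y_def)
  have "y \<noteq> x"
  proof
    assume "y = x"
    then have "dyadic_dist n x \<le> 0"
      using dyadic_dist_le[of n x m] by (simp add: y_def)
    then show False
      using uncapped_radius_le_dyadic_dist[OF assms, of n] cap_radius_pos[of n] by simp
  qed
  have "cap_height n \<le> cap_sup y"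
    using parabola_le_cap[of n y m] caps.le_SUP[of n y] by (simp add: y_def cap_sup_def)
  then have num: "cap_height n \<le> cap_sup y - cap_sup x - \<xi> * (y - x)"
    using side cap_sup_uncapped[OF assms] by simp
  then have "0 \<le> cap_sup y - cap_sup x - \<xi> * (y - x)"
    using cap_height_pos[of n] by linarith
  moreover have "0 < \<bar>y - x\<bar>^2"
    using \<open>y \<noteq> x\<close> by simp
  moreover have "\<bar>y - x\<bar>^2 \<le> (1 / 2^n)^2"
    using close by (intro power_mono) auto
  ultimately have "cap_height n / (1 / 2^n)^2 \<le> (cap_sup y - cap_sup x - \<xi> * (y - x)) / \<bar>y - x\<bar>^2"
    using num by (intro frac_le)
  moreover have "cap_height n / (1 / 2^n)^2 = 2^n"
    by (simp add: cap_height_def power2_eq_square)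
  ultimately show thesis
    using that \<open>y \<noteq> x\<close> close by simp
qed

lemma uncapped_Limsup_quotient:
  assumes "x \<in> uncapped"
  shows "Limsup (at x) (\<lambda>y. ereal ((cap_sup y - cap_sup x - \<xi> * (y - x)) / \<bar>y - x\<bar>^2)) = \<infinity>"
proof (rule Limsup_eq_PInfty_if_frequently_unbounded)
  fix M :: real
  show "\<exists>\<^sub>F y in at x. ereal M \<le> ereal ((cap_sup y - cap_sup x - \<xi> * (y - x)) / \<bar>y - x\<bar>^2)"
    unfolding frequently_at ereal_less_eq(3)
  proof (intro allI impI)
    fix d :: real assume "0 < d"
    obtain n where n: "M \<le> 2 ^ n" "1 / 2 ^ n < d"
      using eventually_happens'[OF sequentially_bot eventually_pow2_ge_and_inverse_less[OF \<open>0 < d\<close>]]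
      by blast
    obtain y where "y \<noteq> x" "\<bar>y - x\<bar> \<le> 1 / 2^n"
      "2^n \<le> (cap_sup y - cap_sup x - \<xi> * (y - x)) / \<bar>y - x\<bar>^2"
      using uncapped_quotient_ge_pow2[OF assms] .
    with n show "\<exists>y\<in>UNIV. y \<noteq> x \<and> dist y x < d \<and> M \<le> (cap_sup y - cap_sup x - \<xi> * (y - x)) / \<bar>y - x\<bar>^2"
      by (intro bexI[of _ y]) (auto simp: dist_real_def)
  qed
qed

lemma emeasure_level_caps_le:
  "emeasure lborel (\<Union>m\<in>{0..(2::nat)^n}. ball (real m / 2^n) (cap_radius n)) \<le> ennreal (1/2 * (1/8)^n)"
proof -
  have "emeasure lborel (\<Union>m\<in>{0..(2::nat)^n}. ball (real m / 2^n) (cap_radius n))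
      \<le> (\<Sum>m\<in>{0..(2::nat)^n}. emeasure lborel (ball (real m / 2^n) (cap_radius n)))"
    by (intro emeasure_subadditive_finite) auto
  also have "\<dots> = (\<Sum>m\<in>{0..(2::nat)^n}. ennreal (2 * cap_radius n))"
    using cap_radius_pos[of n] by (simp add: ball_eq_greaterThanLessThan)
  also have "\<dots> = ennreal ((2^n + 1) * (2 * cap_radius n))"
    using cap_radius_pos[of n] by (simp add: ennreal_mult' ennreal_of_nat_eq_real_of_nat add.commute)
  also have "(2^n + 1) * (2 * cap_radius n) \<le> (2 * 2^n) * (2 * cap_radius n)"
    using cap_radius_pos[of n] by (intro mult_right_mono) auto
  also have "\<dots> = 1/2 * (1/8)^n"
    by (simp add: cap_radius_def power_divide field_simps flip: power_mult_distrib)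
  finally show ?thesis
    by (simp add: ennreal_leI order_trans)
qed

lemma emeasure_caps_cover_le: "emeasure lborel caps_cover \<le> ennreal (4/7)"
proof -
  have "emeasure lborel caps_cover
      \<le> (\<Sum>n. emeasure lborel (\<Union>m\<in>{0..(2::nat)^n}. ball (real m / 2^n) (cap_radius n)))"
    unfolding caps_cover_def by (intro emeasure_subadditive_countably) auto
  also have "\<dots> \<le> (\<Sum>n. ennreal (1/2 * (1/8)^n))"
    by (intro suminf_le emeasure_level_caps_le) auto
  also have "\<dots> = ennreal (\<Sum>n. 1/2 * (1/8::real)^n)"
    by (intro suminf_ennreal2) (auto intro!: summable_mult summable_geometric)
  also have "(\<Sum>n. 1/2 * (1/8::real)^n) = 4/7"
    using sums_mult[OF geometric_sums[of "1/8::real"], of "1/2"] by (simp add: sums_iff)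
  finally show ?thesis .
qed

lemma emeasure_uncapped_pos: "0 < emeasure lebesgue uncapped"
proof -
  have caps_cover_borel: "caps_cover \<in> sets lborel"
    using open_caps_cover by simp
  have "ennreal 1 = emeasure lborel {0..1::real}"
    by simp
  also have "\<dots> \<le> emeasure lborel (uncapped \<union> caps_cover)"
    using uncapped_borel caps_cover_borel by (intro emeasure_mono) (auto simp: uncapped_def)
  also have "\<dots> \<le> emeasure lborel uncapped + emeasure lborel caps_cover"
    using uncapped_borel caps_cover_borel by (rule emeasure_subadditive)
  also have "\<dots> \<le> emeasure lborel uncapped + ennreal (4/7)"
    using emeasure_caps_cover_le by (rule add_left_mono)
  finally have "ennreal 1 \<le> emeasure lborel uncapped + ennreal (4/7)" .
  then have "emeasure lborel uncapped \<noteq> 0"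
    by (auto simp: ennreal_le_iff)
  then show ?thesis
    using uncapped_borel by (simp add: zero_less_iff_neq_zero)
qed

theorem mainTheorem9:
  shows "\<exists>f :: real \<Rightarrow> real. continuous_on UNIV f \<and>
    (\<forall>x. \<exists>\<xi>. Liminf (at x) (\<lambda>y. ereal ((f y - f x - \<xi> * (y - x)) / \<bar>y - x\<bar>^2)) > -\<infinity>) \<and>
    (\<exists>S. S \<in> sets lebesgue \<and> emeasure lebesgue S > 0 \<and>
       (\<forall>x\<in>S. \<forall>\<xi>. Limsup (at x) (\<lambda>y. ereal ((f y - f x - \<xi> * (y - x)) / \<bar>y - x\<bar>^2)) = \<infinity>))"
proof (intro exI[of _ cap_sup] conjI allI)
  show "continuous_on UNIV cap_sup"
    by (rule continuous_on_cap_sup)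
next
  fix x
  obtain \<xi> a where "\<And>y. - a * (y - x)^2 \<le> cap_sup y - cap_sup x - \<xi> * (y - x)"
    using cap_sup_semiconcave by blast
  then have "\<forall>\<^sub>F y in at x. - a \<le> (cap_sup y - cap_sup x - \<xi> * (y - x)) / \<bar>y - x\<bar>^2"
    by (auto simp: eventually_at_filter le_divide_eq)
  then show "\<exists>\<xi>. Liminf (at x) (\<lambda>y. ereal ((cap_sup y - cap_sup x - \<xi> * (y - x)) / \<bar>y - x\<bar>^2)) > -\<infinity>"
    by (intro exI[of _ \<xi>] Liminf_gt_MInfty_if_eventually_bounded_below)
next
  show "\<exists>S. S \<in> sets lebesgue \<and> emeasure lebesgue S > 0 \<and>
      (\<forall>x\<in>S. \<forall>\<xi>. Limsup (at x) (\<lambda>y. ereal ((cap_sup y - cap_sup x - \<xi> * (y - x)) / \<bar>y - x\<bar>^2)) = \<infinity>)"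
    using uncapped_borel emeasure_uncapped_pos uncapped_Limsup_quotient
    by (intro exI[of _ uncapped]) auto
qed

end
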